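(* Let $\alpha\in\mathbb{R}$ be transcendental over $\mathbb{Q}$ and let $K=\mathbb{Q}(\alpha)$. Identify each element of $K$ with the unique rational function $r\in\mathbb{Q}(x)$ such that the element equals $r(\alpha)$, and let $K^+$ be the set of those $r$ with $r(\alpha)>0$. Define $H_+=\{r\in K^+ : r'(\alpha)>0\}$, $H_0=\{r\in K^+ : r'(\alpha)=0\}$, $H_-=\{r\in K^+ : r'(\alpha)<0\}$, where $r'$ is the (formal) derivative of $r$. Then $H_+$, $H_0$, $H_-$ are pairwise disjoint, nonempty, each closed under addition and multiplication, and $K^+=H_+\sqcup H_0\sqcup H_-$. *)

theory Defs
  imports "HOL-Computational_Algebra.Computational_Algebra"
begin

text \<open>Rational functions Q(x) are modelled as the fraction field of Q[x]:
  the type rat poly fract.  rf_rep picks some representation p/q, q nonzero.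
  Evaluation at a transcendental point and the formal derivative do not
  depend on the choice of representative.\<close>

definition rf_rep :: "rat poly fract \<Rightarrow> rat poly \<times> rat poly" where
  "rf_rep r = (SOME pq. snd pq \<noteq> 0 \<and> r = Fract (fst pq) (snd pq))"

definition rf_eval :: "real \<Rightarrow> rat poly fract \<Rightarrow> real" where
  "rf_eval a r = (case rf_rep r of (p, q) \<Rightarrow>
      poly (map_poly of_rat p) a / poly (map_poly of_rat q) a)"

definition rf_deriv :: "rat poly fract \<Rightarrow> rat poly fract" where
  "rf_deriv r = (case rf_rep r of (p, q) \<Rightarrow>
      Fract (pderiv p * q - p * pderiv q) (q * q))"

definition Kpos :: "real \<Rightarrow> rat poly fract set" where
  "Kpos a = {r. rf_eval a r > 0}"

definition Hplus :: "real \<Rightarrow> rat poly fract set" where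
  "Hplus a = {r \<in> Kpos a. rf_eval a (rf_deriv r) > 0}"

definition Hzero :: "real \<Rightarrow> rat poly fract set" where
  "Hzero a = {r \<in> Kpos a. rf_eval a (rf_deriv r) = 0}"

definition Hminus :: "real \<Rightarrow> rat poly fract set" where
  "Hminus a = {r \<in> Kpos a. rf_eval a (rf_deriv r) < 0}"

definition add_mult_closed :: "rat poly fract set \<Rightarrow> bool" where
  "add_mult_closed S \<longleftrightarrow> (\<forall>r\<in>S. \<forall>s\<in>S. r + s \<in> S \<and> r * s \<in> S)"

end

theory Submission
  imports Defs
begin

text \<open>At a transcendental point \<open>\<alpha>\<close> no nonzero rational polynomial vanishes, so
  \<open>r \<mapsto> r(\<alpha>)\<close> is a well-defined ring homomorphism \<open>\<rat>(x) \<rightarrow> \<real>\<close>, and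
  \<open>r \<mapsto> r'(\<alpha>)\<close> is additive and satisfies the Leibniz rule along it.
  For \<open>r, s \<in> K\<^sup>+\<close> the sign of \<open>(r s)'(\<alpha>) = r'(\<alpha>) s(\<alpha>) + r(\<alpha>) s'(\<alpha>)\<close> is therefore
  the common sign of \<open>r'(\<alpha>)\<close> and \<open>s'(\<alpha>)\<close>, and likewise for sums.
  The constant \<open>1\<close> and the linear polynomials \<open>c \<plusminus> x\<close> for suitable
  naturals \<open>c\<close> witness nonemptiness.\<close>

lemma map_poly_of_rat_add [simp]:
  "map_poly (of_rat :: rat \<Rightarrow> 'a :: field_char_0) (p + q) = map_poly of_rat p + map_poly of_rat q"
  by (rule poly_eqI) (simp add: coeff_map_poly of_rat_add)

lemma map_poly_of_rat_mult [simp]: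
  "map_poly (of_rat :: rat \<Rightarrow> 'a :: field_char_0) (p * q) = map_poly of_rat p * map_poly of_rat q"
  by (rule poly_eqI) (simp add: coeff_map_poly coeff_mult of_rat_sum of_rat_mult)

lemma poly_map_poly_of_rat_nonzero:
  fixes x :: "'a :: field_char_0"
  assumes "\<not> algebraic x" "q \<noteq> 0"
  shows "poly (map_poly of_rat q) x \<noteq> 0"
proof
  assume "poly (map_poly of_rat q) x = 0"
  moreover have "map_poly (of_rat :: rat \<Rightarrow> 'a) q \<noteq> 0"
    using assms(2) by (simp add: map_poly_eq_0_iff)
  moreover have "\<forall>i. coeff (map_poly (of_rat :: rat \<Rightarrow> 'a) q) i \<in> \<rat>"
    by (simp add: coeff_map_poly)
  ultimately have "algebraic x"
    unfolding algebraic_altdef by blast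
  with assms(1) show False by simp
qed

lemma rf_rep_wellformed: "snd (rf_rep r) \<noteq> 0" "r = Fract (fst (rf_rep r)) (snd (rf_rep r))"
proof -
  obtain p q where "q \<noteq> 0" "r = Fract p q"
    by (cases r) auto
  then have "\<exists>pq. snd pq \<noteq> 0 \<and> r = Fract (fst pq) (snd pq)"
    by (intro exI[of _ "(p, q)"]) auto
  then have "snd (rf_rep r) \<noteq> 0 \<and> r = Fract (fst (rf_rep r)) (snd (rf_rep r))"
    unfolding rf_rep_def by (rule someI_ex)
  then show "snd (rf_rep r) \<noteq> 0" "r = Fract (fst (rf_rep r)) (snd (rf_rep r))"
    by simp_all
qed

lemma rf_rep_Fract_cross_eq:
  assumes "q \<noteq> 0" "rf_rep (Fract p q) = (p', q')"
  shows "q' \<noteq> 0" "p * q' = p' * q"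
  using rf_rep_wellformed[of "Fract p q"] assms by (simp_all add: eq_fract)

lemma rf_eval_Fract:
  assumes "\<not> algebraic a" "q \<noteq> 0"
  shows "rf_eval a (Fract p q) = poly (map_poly of_rat p) a / poly (map_poly of_rat q) a"
proof -
  obtain p' q' where rep: "rf_rep (Fract p q) = (p', q')"
    by fastforce
  note cross = rf_rep_Fract_cross_eq[OF assms(2) rep]
  have "poly (map_poly of_rat (p * q')) a = poly (map_poly of_rat (p' * q)) a"
    using cross(2) by simp
  moreover have "poly (map_poly of_rat q) a \<noteq> 0" "poly (map_poly of_rat q') a \<noteq> 0"
    using poly_map_poly_of_rat_nonzero assms cross(1) by auto
  ultimately show ?thesis
    unfolding rf_eval_def rep by (simp add: field_simps)
qed

lemma rf_deriv_Fract:
  assumes "q \<noteq> 0"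
  shows "rf_deriv (Fract p q) = Fract (pderiv p * q - p * pderiv q) (q * q)"
proof -
  obtain p' q' where rep: "rf_rep (Fract p q) = (p', q')"
    by fastforce
  note cross = rf_rep_Fract_cross_eq[OF assms rep]
  have "pderiv (p * q') = pderiv (p' * q)"
    using cross(2) by simp
  then have "p * pderiv q' + q' * pderiv p = p' * pderiv q + q * pderiv p'"
    by (simp only: pderiv_mult)
  with cross(2) have "(pderiv p' * q' - p' * pderiv q') * (q * q) = (pderiv p * q - p * pderiv q) * (q' * q')"
    by algebra
  then show ?thesis
    unfolding rf_deriv_def rep using assms cross(1) by (simp add: eq_fract)
qed

lemma rf_eval_add:
  assumes "\<not> algebraic a"
  shows "rf_eval a (r + s) = rf_eval a r + rf_eval a s"
proof -
  obtain p q p' q' where "r = Fract p q" "q \<noteq> 0" "s = Fract p' q'" "q' \<noteq> 0"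
    by (metis Fract_cases)
  moreover from this have "poly (map_poly of_rat q) a \<noteq> 0" "poly (map_poly of_rat q') a \<noteq> 0"
    using poly_map_poly_of_rat_nonzero assms by auto
  ultimately show ?thesis
    using assms by (simp add: rf_eval_Fract field_simps)
qed

lemma rf_eval_mult:
  assumes "\<not> algebraic a"
  shows "rf_eval a (r * s) = rf_eval a r * rf_eval a s"
proof -
  obtain p q p' q' where "r = Fract p q" "q \<noteq> 0" "s = Fract p' q'" "q' \<noteq> 0"
    by (metis Fract_cases)
  then show ?thesis
    using assms by (simp add: rf_eval_Fract)
qed

lemma rf_deriv_add: "rf_deriv (r + s) = rf_deriv r + rf_deriv s"
proof -
  obtain p q p' q' where "r = Fract p q" "q \<noteq> 0" "s = Fract p' q'" "q' \<noteq> 0"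
    by (metis Fract_cases)
  then show ?thesis
    by (simp add: rf_deriv_Fract eq_fract pderiv_add pderiv_mult pderiv_diff algebra_simps)
qed

lemma rf_deriv_mult: "rf_deriv (r * s) = rf_deriv r * s + r * rf_deriv s"
proof -
  obtain p q p' q' where "r = Fract p q" "q \<noteq> 0" "s = Fract p' q'" "q' \<noteq> 0"
    by (metis Fract_cases)
  then show ?thesis
    by (simp add: rf_deriv_Fract eq_fract pderiv_add pderiv_mult pderiv_diff algebra_simps)
qed

lemma rf_eval_to_fract:
  assumes "\<not> algebraic a"
  shows "rf_eval a (to_fract p) = poly (map_poly of_rat p) a"
  using assms by (simp add: to_fract_def rf_eval_Fract)

lemma rf_deriv_to_fract: "rf_deriv (to_fract p) = to_fract (pderiv p)"
  by (simp add: to_fract_def rf_deriv_Fract)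

lemma add_mult_closed_Hplus:
  assumes "\<not> algebraic a"
  shows "add_mult_closed (Hplus a)"
  using assms unfolding add_mult_closed_def Hplus_def Kpos_def
  by (auto simp: rf_eval_add rf_eval_mult rf_deriv_add rf_deriv_mult add_pos_pos)

lemma add_mult_closed_Hzero:
  assumes "\<not> algebraic a"
  shows "add_mult_closed (Hzero a)"
  using assms unfolding add_mult_closed_def Hzero_def Kpos_def
  by (auto simp: rf_eval_add rf_eval_mult rf_deriv_add rf_deriv_mult add_pos_pos)

lemma add_mult_closed_Hminus:
  assumes "\<not> algebraic a"
  shows "add_mult_closed (Hminus a)"
  using assms unfolding add_mult_closed_def Hminus_def Kpos_def
  by (auto simp: rf_eval_add rf_eval_mult rf_deriv_add rf_deriv_mult add_neg_neg mult_neg_pos mult_pos_neg)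

lemma one_in_Hzero:
  assumes "\<not> algebraic a"
  shows "1 \<in> Hzero a"
  using rf_eval_to_fract[OF assms, of 1] rf_eval_to_fract[OF assms, of 0] rf_deriv_to_fract[of 1]
  by (simp add: Hzero_def Kpos_def)

lemma linear_in_Hplus:
  assumes "\<not> algebraic a" "of_rat c + a > 0"
  shows "to_fract [:c, 1:] \<in> Hplus a"
  using assms by (simp add: Hplus_def Kpos_def rf_eval_to_fract rf_deriv_to_fract map_poly_pCons pderiv_pCons)

lemma linear_in_Hminus:
  assumes "\<not> algebraic a" "of_rat c - a > 0"
  shows "to_fract [:c, -1:] \<in> Hminus a"
  using assms by (simp add: Hminus_def Kpos_def rf_eval_to_fract rf_deriv_to_fract map_poly_pCons pderiv_pCons of_rat_minus)

lemma Hplus_nonempty: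
  assumes "\<not> algebraic a"
  shows "Hplus a \<noteq> {}"
proof -
  obtain n :: nat where "- a < of_nat n"
    using reals_Archimedean2 by blast
  then have "to_fract [:of_nat n, 1:] \<in> Hplus a"
    using assms by (intro linear_in_Hplus) simp_all
  then show ?thesis by blast
qed

lemma Hminus_nonempty:
  assumes "\<not> algebraic a"
  shows "Hminus a \<noteq> {}"
proof -
  obtain n :: nat where "a < of_nat n"
    using reals_Archimedean2 by blast
  then have "to_fract [:of_nat n, -1:] \<in> Hminus a"
    using assms by (intro linear_in_Hminus) simp_all
  then show ?thesis by blast
qed

lemma Kpos_eq_Hplus_Hzero_Hminus: "Kpos a = Hplus a \<union> Hzero a \<union> Hminus a"
  by (auto simp: Hplus_def Hzero_def Hminus_def)

lemma Hplus_Hzero_Hminus_disjoint: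
  "Hplus a \<inter> Hzero a = {}" "Hplus a \<inter> Hminus a = {}" "Hzero a \<inter> Hminus a = {}"
  by (auto simp: Hplus_def Hzero_def Hminus_def)

theorem proposition2p1:
  fixes \<alpha> :: real
  assumes "\<not> algebraic \<alpha>"
  shows "Hplus \<alpha> \<inter> Hzero \<alpha> = {} \<and> Hplus \<alpha> \<inter> Hminus \<alpha> = {} \<and> Hzero \<alpha> \<inter> Hminus \<alpha> = {}
    \<and> Hplus \<alpha> \<noteq> {} \<and> Hzero \<alpha> \<noteq> {} \<and> Hminus \<alpha> \<noteq> {}
    \<and> add_mult_closed (Hplus \<alpha>) \<and> add_mult_closed (Hzero \<alpha>) \<and> add_mult_closed (Hminus \<alpha>)
    \<and> Kpos \<alpha> = Hplus \<alpha> \<union> Hzero \<alpha> \<union> Hminus \<alpha>"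
  using Hplus_Hzero_Hminus_disjoint
    Hplus_nonempty[OF assms] one_in_Hzero[OF assms] Hminus_nonempty[OF assms]
    add_mult_closed_Hplus[OF assms] add_mult_closed_Hzero[OF assms] add_mult_closed_Hminus[OF assms]
    Kpos_eq_Hplus_Hzero_Hminus
  by blast

end
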